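(* Let $c\geq 1$ be an integer. For all integers $n\geq 1$, $$\bar a_c(n)\equiv\begin{cases}2 \pmod 4 & \text{if } n=k^2 \text{ for some } k\in\mathbb{Z},\\ 2(c+1)\pmod 4 & \text{if } n=2k^2 \text{ for some } k\in\mathbb{Z},\\ 0\pmod 4 & \text{otherwise.}\end{cases}$$
   Context: For an integer $k\geq 1$ let $f_k:=\prod_{n\geq 1}(1-q^{kn})$. For an integer $c\geq1$, the generalized overcubic partition function $\bar a_c(n)$ is defined by the generating function $\sum_{n\geq 0}\bar a_c(n)q^n=\dfrac{f_4^{c-1}}{f_1^2f_2^{2c-3}}$. *)

theory Defs
  imports "HOL-Computational_Algebra.Formal_Power_Series" "HOL-Number_Theory.Cong"
begin

text \<open>f_k = prod_{m>=1} (1 - q^(k m)) as a formal power series over the rationals.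
  The infinite product is taken in the usual formal (q-adic) sense: for k >= 1 the
  coefficient of q^n is already determined by the finite product over m = 1..n.\<close>
definition eta_f :: "nat \<Rightarrow> rat fps" where
  "eta_f k = Abs_fps (\<lambda>n. fps_nth (\<Prod>m\<in>{1..n}. (1 - fps_X ^ (k * m) :: rat fps)) n)"

definition fps_ipow :: "rat fps \<Rightarrow> int \<Rightarrow> rat fps" where
  "fps_ipow f e = (if 0 \<le> e then f ^ nat e else inverse (f ^ nat (- e)))"

definition overcubic_gf :: "nat \<Rightarrow> rat fps" where
  "overcubic_gf c = fps_ipow (eta_f 4) (int c - 1)
      * inverse ((eta_f 1) ^ 2 * fps_ipow (eta_f 2) (2 * int c - 3))"

definition abar :: "nat \<Rightarrow> nat \<Rightarrow> rat" where
  "abar c n = fps_nth (overcubic_gf c) n"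

end

theory Submission
  imports Defs "HOL-Library.Numeral_Type" "HOL-Library.Disjoint_Sets"
begin

(*
  The identity 1 - q^(2d) = (1 - q^d)^2 (1 + 2 q^d / (1 - q^d)) holds exactly, and modulo 4
  a product of factors 1 + 2x equals 1 + 2 (sum of the x).  For d = k m, m = 1, 2, ..., the coefficient
  of q^j in the sum of the q^(km) / (1 - q^(km)) is the number of divisors of j / k, which is
  odd exactly when j / k is a square.  Hence f_(2k) = f_k^2 (1 + 2 S_k) mod 4, where
  S_k = sum_(m >= 1) q^(k m^2).  Writing the generating function as
  f_2 f_4^(c-1) / (f_1^2 f_2^(2c-2)) and substituting for f_2 and f_4 leaves
  (1 + 2 S_1) (1 + 2 S_2)^(c-1) = 1 + 2 S_1 + 2 (c + 1) S_2 mod 4.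

  Infinite products are q-adic limits of their partial products; reducing modulo 4 means
  mapping an integer-coefficient version of the series to coefficients in the ring 4 = Z/4Z.
*)

unbundle fps_syntax

definition fps_map :: "('a \<Rightarrow> 'b) \<Rightarrow> 'a fps \<Rightarrow> 'b fps" where
  "fps_map h f = Abs_fps (\<lambda>n. h (f $ n))"

lemma fps_map_nth [simp]: "fps_map h f $ n = h (f $ n)"
  by (simp add: fps_map_def)

lemma fps_map_of_int_one [simp]: "fps_map of_int 1 = (1 :: 'a::comm_ring_1 fps)"
  by (rule fps_ext) simp

lemma fps_map_of_int_X [simp]: "fps_map of_int fps_X = (fps_X :: 'a::comm_ring_1 fps)"
  by (rule fps_ext) (simp add: fps_X_nth)

lemma fps_map_of_int_diff [simp]:
  "fps_map of_int (f - g) = (fps_map of_int f - fps_map of_int g :: 'a::comm_ring_1 fps)"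
  by (rule fps_ext) simp

lemma fps_map_of_int_mult [simp]:
  "fps_map of_int (f * g) = (fps_map of_int f * fps_map of_int g :: 'a::comm_ring_1 fps)"
  by (rule fps_ext) (simp add: fps_mult_nth)

lemma fps_map_of_int_power [simp]:
  "fps_map of_int (f ^ k) = (fps_map of_int f ^ k :: 'a::comm_ring_1 fps)"
  by (induction k) simp_all

lemma fps_map_of_int_prod [simp]:
  "fps_map of_int (prod F A) = (\<Prod>a\<in>A. fps_map of_int (F a) :: 'a::comm_ring_1 fps)"
  by (induction A rule: infinite_finite_induct) simp_all

lemma tendsto_fps_mult:
  fixes f g :: "'b \<Rightarrow> 'a::comm_ring_1 fps"
  assumes "(f \<longlongrightarrow> F) G" and "(g \<longlongrightarrow> H) G"
  shows "((\<lambda>x. f x * g x) \<longlongrightarrow> F * H) G"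
proof (rule tendsto_fpsI)
  fix n
  have "eventually (\<lambda>x. \<forall>i\<le>n. f x $ i = F $ i) G"
    using eventually_compose_filterlim[OF eventually_fps_nth_eq_nhds_fps_strong assms(1)] .
  moreover have "eventually (\<lambda>x. \<forall>i\<le>n. g x $ i = H $ i) G"
    using eventually_compose_filterlim[OF eventually_fps_nth_eq_nhds_fps_strong assms(2)] .
  ultimately show "eventually (\<lambda>x. (f x * g x) $ n = (F * H) $ n) G"
    by eventually_elim (simp add: fps_mult_nth)
qed

lemma fps_numeral_mult_nth [simp]: "(numeral c * f) $ n = numeral c * f $ n"
  by (simp add: numeral_fps_const fps_mult_left_const_nth)

lemma fps_mult_right_cancel:
  fixes f g d :: "'a::comm_ring_1 fps"
  assumes "d $ 0 = 1" and "f * d = g * d"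
  shows "f = g"
proof -
  have inv: "d * fps_right_inverse d 1 = 1"
    using assms(1) by (intro fps_right_inverse) simp
  have "f = f * d * fps_right_inverse d 1"
    by (simp only: mult.assoc inv mult_1_right)
  also have "\<dots> = g * d * fps_right_inverse d 1"
    by (simp only: assms(2))
  also have "\<dots> = g"
    by (simp only: mult.assoc inv mult_1_right)
  finally show ?thesis .
qed

definition euler_partial_prod :: "nat \<Rightarrow> nat \<Rightarrow> 'a::comm_ring_1 fps" where
  "euler_partial_prod k N = (\<Prod>m\<in>{1..N}. 1 - fps_X ^ (k * m))"

definition euler_prod :: "nat \<Rightarrow> 'a::comm_ring_1 fps" where
  "euler_prod k = Abs_fps (\<lambda>n. euler_partial_prod k n $ n)"

lemma eta_f_eq_euler_prod: "eta_f k = euler_prod k"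
  by (simp add: eta_f_def euler_prod_def euler_partial_prod_def)

lemma euler_partial_prod_Suc_nth:
  assumes "i < k * Suc N"
  shows "euler_partial_prod k (Suc N) $ i = (euler_partial_prod k N $ i :: 'a::comm_ring_1)"
proof -
  have "euler_partial_prod k (Suc N) =
      euler_partial_prod k N - euler_partial_prod k N * (fps_X ^ (k * Suc N) :: 'a fps)"
    by (simp add: euler_partial_prod_def algebra_simps)
  then show ?thesis
    using assms by (simp add: fps_X_power_mult_right_nth)
qed

lemma euler_partial_prod_nth_stable:
  assumes "k \<ge> 1" and "i \<le> N"
  shows "euler_partial_prod k N $ i = (euler_prod k $ i :: 'a::comm_ring_1)"
  using assms(2)
proof (induction N rule: dec_induct)
  case (step N)
  have "Suc N \<le> k * Suc N"
    using mult_le_mono1[OF assms(1), of "Suc N"] by simp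
  with step.hyps have "i < k * Suc N"
    by linarith
  then show ?case
    using step.IH by (simp add: euler_partial_prod_Suc_nth)
qed (simp add: euler_prod_def)

lemma LIMSEQ_euler_partial_prod:
  "k \<ge> 1 \<Longrightarrow>
    (\<lambda>N. euler_partial_prod k N) \<longlonglongrightarrow> (euler_prod k :: 'a::comm_ring_1 fps)"
  by (intro tendsto_fpsI eventually_sequentiallyI) (rule euler_partial_prod_nth_stable)

lemma euler_prod_nth_0 [simp]: "euler_prod k $ 0 = 1"
  by (simp add: euler_prod_def euler_partial_prod_def)

lemma fps_map_of_int_euler_prod [simp]:
  "fps_map of_int (euler_prod k) = (euler_prod k :: 'a::comm_ring_1 fps)"
proof -
  have "fps_map of_int (euler_partial_prod k n) = (euler_partial_prod k n :: 'a fps)" for n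
    by (simp add: euler_partial_prod_def)
  then have "of_int (euler_partial_prod k n $ n) = (euler_partial_prod k n $ n :: 'a)" for n
    by (metis fps_map_nth)
  then show ?thesis
    by (intro fps_ext) (simp add: euler_prod_def)
qed

section \<open>Divisor counts\<close>

lemma odd_card_divisors_iff_square:
  fixes n :: nat
  assumes "n > 0"
  shows "odd (card {d. d dvd n}) \<longleftrightarrow> (\<exists>a. n = a ^ 2)"
proof -
  define D where "D = {d. d dvd n}"
  define Q where "Q = {d\<in>D. d ^ 2 = n}"
  have fin: "finite D"
    using assms by (simp add: D_def finite_divisors_nat)
  have pair: "n div d \<in> D - Q" "n div (n div d) = d" "n div d \<noteq> d"
    if "d \<in> D - Q" for d
    using that assms by (auto simp: D_def Q_def power2_eq_square elim!: dvdE)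
  \<comment> \<open>d and n div d pair off the divisors in D - Q, so they cancel in characteristic 2\<close>
  have "(of_nat (card (D - Q)) :: 2) = (\<Sum>d\<in>D - Q. 1)"
    by simp
  also have "\<dots> = 0"
    by (rule sum_involution_eq_0[where h = "\<lambda>d. n div d"]) (use pair in auto)
  finally have "even (card (D - Q))"
    by (simp add: of_nat_eq_0_iff_char_dvd)
  moreover have "card D = card (D - Q) + card Q"
    using fin card_mono[OF fin] by (simp add: Q_def card_Diff_subset finite_subset subset_eq)
  moreover have "card Q = (if \<exists>a. n = a ^ 2 then 1 else 0)"
  proof (cases "\<exists>a. n = a ^ 2")
    case True
    then obtain a where "n = a ^ 2" by blast
    then have "Q = {a}"
      by (auto simp: Q_def D_def power2_eq_iff_nonneg)
    then show ?thesis using True by simp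
  next
    case False
    then have "Q = {}"
      by (auto simp: Q_def)
    then show ?thesis using False by simp
  qed
  ultimately show ?thesis
    by (auto simp: D_def split: if_splits)
qed

lemma odd_card_scaled_divisors_iff:
  fixes j k :: nat
  assumes "j > 0"
  shows "odd (card {m. k * m dvd j}) \<longleftrightarrow> (\<exists>a. j = k * a ^ 2)"
proof (cases "k dvd j")
  case True
  then obtain q where q: "j = k * q" ..
  with assms have "k > 0" "q > 0" by auto
  then have "{m. k * m dvd j} = {m. m dvd q}"
    and "(\<exists>a. j = k * a ^ 2) \<longleftrightarrow> (\<exists>a. q = a ^ 2)"
    using q by auto
  then show ?thesis
    using odd_card_divisors_iff_square[OF \<open>q > 0\<close>] by simp
next
  case False
  then have "{m. k * m dvd j} = {}" "\<not> (\<exists>a. j = k * a ^ 2)"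
    by (auto dest: dvd_mult_left)
  then show ?thesis
    by simp
qed

lemma ex_int_square_iff:
  "(\<exists>k::int. int n = int m * k ^ 2) \<longleftrightarrow> (\<exists>a::nat. n = m * a ^ 2)"
proof
  assume "\<exists>k::int. int n = int m * k ^ 2"
  then obtain k :: int where "int n = int m * k ^ 2" ..
  moreover have "int (m * nat \<bar>k\<bar> ^ 2) = int m * k ^ 2"
    by simp
  ultimately have "n = m * nat \<bar>k\<bar> ^ 2"
    by linarith
  then show "\<exists>a::nat. n = m * a ^ 2" ..
next
  assume "\<exists>a::nat. n = m * a ^ 2"
  then obtain a where "n = m * a ^ 2" ..
  then have "int n = int m * int a ^ 2"
    by simp
  then show "\<exists>k::int. int n = int m * k ^ 2" ..
qed

lemma square_eq_twice_square_imp_zero: "(a::nat) ^ 2 = 2 * b ^ 2 \<Longrightarrow> b = 0"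
proof (induction a arbitrary: b rule: less_induct)
  case (less a)
  show "b = 0"
  proof (rule ccontr)
    assume "b \<noteq> 0"
    have "even a"
      using less.prems by (metis dvd_triv_left even_power)
    then obtain a' where a': "a = 2 * a'" ..
    with less.prems have "b ^ 2 = 2 * a' ^ 2"
      by (simp add: power_mult_distrib)
    have "b ^ 2 < a ^ 2"
      using less.prems \<open>b \<noteq> 0\<close> by simp
    then have "b < a"
      by (rule power_less_imp_less_base) simp
    from less.IH[OF this \<open>b ^ 2 = 2 * a' ^ 2\<close>] have "a' = 0" .
    then show False
      using a' less.prems \<open>b \<noteq> 0\<close> by simp
  qed
qed

section \<open>Euler products modulo 4\<close>

lemma prod_one_plus_two_eq:
  fixes g :: "'b \<Rightarrow> 'a::comm_ring_1"
  assumes "(4::'a) = 0"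
  shows "(\<Prod>a\<in>A. 1 + 2 * g a) = 1 + 2 * sum g A"
proof (induction A rule: infinite_finite_induct)
  case (insert x A)
  have "(1 + 2 * g x) * (1 + 2 * sum g A) = 1 + 2 * (g x + sum g A) + 4 * (g x * sum g A)"
    by (simp add: algebra_simps)
  then show ?case
    using insert assms by simp
qed simp_all

lemma one_plus_two_power_eq:
  fixes x :: "'a::comm_ring_1"
  assumes "(4::'a) = 0"
  shows "(1 + 2 * x) ^ n = 1 + 2 * of_nat n * x"
  using prod_one_plus_two_eq[OF assms, of "\<lambda>_. x" "{..<n}"] by (simp add: mult.assoc)

lemma two_mult_of_nat_eq:
  fixes n :: nat
  assumes "(4::'a::comm_ring_1) = 0"
  shows "2 * (of_nat n :: 'a) = 2 * of_bool (odd n)"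
proof -
  have "2 * n = 4 * (n div 2) + 2 * (n mod 2)"
    by presburger
  then have "2 * (of_nat n :: 'a) = 4 * of_nat (n div 2) + 2 * of_nat (n mod 2)"
    by (metis of_nat_add of_nat_mult of_nat_numeral)
  then show ?thesis
    using assms by (simp add: odd_iff_mod_2_eq_one)
qed

lemma four_eq_zero_fps: "(4 :: 4 fps) = 0"
  by (simp add: numeral_fps_const)

definition multiples_fps :: "nat \<Rightarrow> 'a::comm_ring_1 fps" where
  "multiples_fps d = Abs_fps (\<lambda>j. of_bool (0 < j \<and> d dvd j))"

definition scaled_squares_fps :: "nat \<Rightarrow> 'a::comm_ring_1 fps" where
  "scaled_squares_fps k = Abs_fps (\<lambda>j. of_bool (0 < j \<and> (\<exists>a. j = k * a ^ 2)))"

lemma one_minus_X_power_mult_multiples_fps: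
  assumes "d \<ge> 1"
  shows "(1 - fps_X ^ d) * multiples_fps d = (fps_X ^ d :: 'a::comm_ring_1 fps)"
proof (rule fps_ext)
  fix j
  have "d dvd j - d \<longleftrightarrow> d dvd j" if "d \<le> j"
    using that by (simp add: dvd_minus_self)
  moreover have "\<not> d dvd j" if "0 < j" "j < d"
    using that by (auto dest: dvd_imp_le)
  ultimately show "((1 - fps_X ^ d) * multiples_fps d) $ j = (fps_X ^ d :: 'a fps) $ j"
    using assms by (auto simp: algebra_simps multiples_fps_def fps_X_power_mult_nth fps_X_power_nth)
qed

lemma one_minus_X_power_double:
  assumes "d \<ge> 1"
  shows "1 - fps_X ^ (2 * d) =
    (1 - fps_X ^ d) ^ 2 * (1 + 2 * multiples_fps d :: 'a::comm_ring_1 fps)"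
proof -
  have "(1 - fps_X ^ d) ^ 2 * (1 + 2 * multiples_fps d) =
      (1 - fps_X ^ d) * ((1 - fps_X ^ d) + 2 * ((1 - fps_X ^ d) * multiples_fps d) :: 'a fps)"
    by (simp add: algebra_simps power2_eq_square)
  also have "\<dots> = 1 - fps_X ^ (2 * d)"
    unfolding one_minus_X_power_mult_multiples_fps[OF assms]
    by (simp add: algebra_simps power_mult power2_eq_square)
  finally show ?thesis ..
qed

lemma euler_partial_prod_double:
  assumes "k \<ge> 1"
  shows "euler_partial_prod (2 * k) N =
    euler_partial_prod k N ^ 2 *
      (\<Prod>m\<in>{1..N}. 1 + 2 * multiples_fps (k * m) :: 'a::comm_ring_1 fps)"
proof -
  have "1 - fps_X ^ (2 * k * m) =
      (1 - fps_X ^ (k * m)) ^ 2 * (1 + 2 * multiples_fps (k * m) :: 'a fps)"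
    if "m \<in> {1..N}" for m
    using that assms one_minus_X_power_double[of "k * m"] by (simp add: mult.assoc)
  then show ?thesis
    by (simp add: euler_partial_prod_def prod.distrib prod_power_distrib)
qed

lemma sum_multiples_fps_nth:
  assumes "k \<ge> 1" and "0 < j" and "j \<le> N"
  shows "(\<Sum>m\<in>{1..N}. multiples_fps (k * m)) $ j =
    (of_nat (card {m. k * m dvd j}) :: 'a::comm_ring_1)"
proof -
  have "m \<in> {1..N}" if "k * m dvd j" for m
  proof -
    have "m \<noteq> 0" "k * m \<le> j"
      using that assms by (auto simp: dvd_imp_le)
    moreover have "m \<le> k * m"
      using assms(1) by simp
    ultimately have "1 \<le> m" "m \<le> N"
      using assms(3) by linarith+
    then show ?thesis
      by simp
  qed
  then have "{m. k * m dvd j} = {1..N} \<inter> {m. k * m dvd j}"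
    by blast
  then show ?thesis
    using assms by (simp add: fps_sum_nth multiples_fps_def sum_of_bool_eq)
qed

lemma LIMSEQ_prod_one_plus_two_multiples_fps:
  assumes "k \<ge> 1"
  shows "(\<lambda>N. \<Prod>m\<in>{1..N}. 1 + 2 * multiples_fps (k * m))
    \<longlonglongrightarrow> (1 + 2 * scaled_squares_fps k :: 4 fps)"
proof (intro tendsto_fpsI eventually_sequentiallyI)
  fix j N :: nat
  assume "j \<le> N"
  have "(\<Prod>m\<in>{1..N}. 1 + 2 * multiples_fps (k * m)) $ j =
      (1 + 2 * (\<Sum>m\<in>{1..N}. multiples_fps (k * m)) :: 4 fps) $ j"
    by (simp add: prod_one_plus_two_eq four_eq_zero_fps)
  also have "\<dots> = (1 + 2 * scaled_squares_fps k :: 4 fps) $ j"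
  proof (cases "j = 0")
    case True
    then show ?thesis
      by (simp add: fps_sum_nth multiples_fps_def scaled_squares_fps_def)
  next
    case False
    then have "(\<Sum>m\<in>{1..N}. multiples_fps (k * m)) $ j =
        (of_nat (card {m. k * m dvd j}) :: 4)"
      using \<open>j \<le> N\<close> assms by (intro sum_multiples_fps_nth) auto
    then show ?thesis
      using False
      by (simp add: two_mult_of_nat_eq odd_card_scaled_divisors_iff scaled_squares_fps_def)
  qed
  finally show "(\<Prod>m\<in>{1..N}. 1 + 2 * multiples_fps (k * m)) $ j =
      (1 + 2 * scaled_squares_fps k :: 4 fps) $ j" .
qed

lemma euler_prod_double_mod4:
  assumes "k \<ge> 1"
  shows "(euler_prod (2 * k) :: 4 fps) = euler_prod k ^ 2 * (1 + 2 * scaled_squares_fps k)"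
proof (rule LIMSEQ_unique)
  show "(\<lambda>N. euler_partial_prod (2 * k) N)
      \<longlonglongrightarrow> (euler_prod (2 * k) :: 4 fps)"
    using assms by (intro LIMSEQ_euler_partial_prod) simp
  have "(\<lambda>N. euler_partial_prod k N * euler_partial_prod k N *
        (\<Prod>m\<in>{1..N}. 1 + 2 * multiples_fps (k * m)))
      \<longlonglongrightarrow> (euler_prod k * euler_prod k * (1 + 2 * scaled_squares_fps k) :: 4 fps)"
    using assms
    by (intro tendsto_fps_mult LIMSEQ_euler_partial_prod LIMSEQ_prod_one_plus_two_multiples_fps)
  then show "(\<lambda>N. euler_partial_prod (2 * k) N)
      \<longlonglongrightarrow> (euler_prod k ^ 2 * (1 + 2 * scaled_squares_fps k) :: 4 fps)"
    using assms by (simp add: euler_partial_prod_double power2_eq_square)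
qed

section \<open>The overcubic generating function\<close>

lemma fps_ipow_nonneg: "e \<ge> 0 \<Longrightarrow> fps_ipow f e = f ^ nat e"
  by (simp add: fps_ipow_def)

lemma fps_ipow_mult_self:
  assumes "f $ 0 \<noteq> 0" and "e \<ge> -1"
  shows "fps_ipow f e * f = f ^ nat (e + 1)"
proof (cases "e \<ge> 0")
  case True
  then have "nat (e + 1) = Suc (nat e)"
    by simp
  then show ?thesis
    using True by (simp add: fps_ipow_def mult.commute)
next
  case False
  with assms have "e = -1"
    by simp
  then show ?thesis
    using assms(1) by (simp add: fps_ipow_def inverse_mult_eq_1)
qed

lemma fps_ipow_nth_0_neq_0: "f $ 0 \<noteq> 0 \<Longrightarrow> fps_ipow f e $ 0 \<noteq> 0"
  by (simp add: fps_ipow_def)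

lemma overcubic_gf_mult_denominator:
  assumes "c \<ge> 1"
  shows "overcubic_gf c * (eta_f 1 ^ 2 * eta_f 2 ^ (2 * c - 2)) = eta_f 2 * eta_f 4 ^ (c - 1)"
proof -
  define D where "D = eta_f 1 ^ 2 * fps_ipow (eta_f 2) (2 * int c - 3)"
  have "nat (2 * int c - 3 + 1) = 2 * c - 2"
    by simp
  then have denominator: "eta_f 1 ^ 2 * eta_f 2 ^ (2 * c - 2) = D * eta_f 2"
    using assms by (simp add: D_def mult.assoc fps_ipow_mult_self eta_f_eq_euler_prod)
  have "fps_ipow (eta_f 4) (int c - 1) = eta_f 4 ^ (c - 1)"
    using assms by (simp add: fps_ipow_nonneg nat_diff_distrib)
  then have "overcubic_gf c = eta_f 4 ^ (c - 1) * inverse D"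
    by (simp only: overcubic_gf_def D_def)
  then have "overcubic_gf c * (eta_f 1 ^ 2 * eta_f 2 ^ (2 * c - 2)) =
      eta_f 4 ^ (c - 1) * (inverse D * D) * eta_f 2"
    by (simp only: denominator mult.assoc)
  also have "inverse D * D = 1"
    by (intro inverse_mult_eq_1) (simp add: D_def fps_ipow_nth_0_neq_0 eta_f_eq_euler_prod)
  finally show ?thesis
    by (simp add: mult.commute)
qed

text \<open>The denominator of overcubic_gf c is multiplied by one more factor f_2, which makes
  all exponents nonnegative for c = 1 as well; its constant term is 1, so it is invertible
  over the integers.\<close>
definition overcubic_int :: "nat \<Rightarrow> int fps" where
  "overcubic_int c = euler_prod 2 * euler_prod 4 ^ (c - 1) *
     fps_right_inverse (euler_prod 1 ^ 2 * euler_prod 2 ^ (2 * c - 2)) 1"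

lemma fps_map_overcubic_int_mult_denominator:
  "fps_map of_int (overcubic_int c) * (euler_prod 1 ^ 2 * euler_prod 2 ^ (2 * c - 2)) =
     (euler_prod 2 * euler_prod 4 ^ (c - 1) :: 'a::comm_ring_1 fps)"
proof -
  define D :: "int fps" where "D = euler_prod 1 ^ 2 * euler_prod 2 ^ (2 * c - 2)"
  have "D * fps_right_inverse D 1 = 1"
    by (intro fps_right_inverse) (simp add: D_def fps_power_zeroth)
  moreover have "overcubic_int c * D =
      euler_prod 2 * euler_prod 4 ^ (c - 1) * (D * fps_right_inverse D 1)"
    unfolding overcubic_int_def D_def[symmetric] by (simp only: ac_simps)
  ultimately have "overcubic_int c * D = euler_prod 2 * euler_prod 4 ^ (c - 1)"
    by simp
  then have "fps_map of_int (overcubic_int c * D) =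
      (fps_map of_int (euler_prod 2 * euler_prod 4 ^ (c - 1)) :: 'a fps)"
    by simp
  then show ?thesis
    by (simp add: D_def)
qed

lemma overcubic_gf_eq_fps_map:
  assumes "c \<ge> 1"
  shows "overcubic_gf c = fps_map of_int (overcubic_int c)"
proof (rule fps_mult_right_cancel)
  show "(eta_f 1 ^ 2 * eta_f 2 ^ (2 * c - 2)) $ 0 = 1"
    by (simp add: eta_f_eq_euler_prod fps_power_zeroth)
  show "overcubic_gf c * (eta_f 1 ^ 2 * eta_f 2 ^ (2 * c - 2)) =
      fps_map of_int (overcubic_int c) * (eta_f 1 ^ 2 * eta_f 2 ^ (2 * c - 2))"
    using overcubic_gf_mult_denominator[OF assms]
      fps_map_overcubic_int_mult_denominator[where 'a = rat]
    by (simp only: eta_f_eq_euler_prod)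
qed

lemma fps_map_overcubic_int_mod4:
  assumes "c \<ge> 1"
  shows "(fps_map of_int (overcubic_int c) :: 4 fps) =
    1 + 2 * scaled_squares_fps 1 + 2 * of_nat (c + 1) * scaled_squares_fps 2"
proof (rule fps_mult_right_cancel)
  define E :: "nat \<Rightarrow> 4 fps" where "E = euler_prod"
  define T :: "nat \<Rightarrow> 4 fps" where "T k = 1 + 2 * scaled_squares_fps k" for k
  have E2: "E 2 = E 1 ^ 2 * T 1" and E4: "E 4 = E 2 ^ 2 * T 2"
    using euler_prod_double_mod4[of 1] euler_prod_double_mod4[of 2] by (simp_all add: E_def T_def)
  have "fps_map of_int (overcubic_int c) * (E 1 ^ 2 * E 2 ^ (2 * c - 2)) = E 2 * E 4 ^ (c - 1)"
    unfolding E_def by (rule fps_map_overcubic_int_mult_denominator)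
  also have "E 4 ^ (c - 1) = E 2 ^ (2 * c - 2) * T 2 ^ (c - 1)"
    unfolding E4 by (simp add: power_mult_distrib diff_mult_distrib2 flip: power_mult)
  also have "E 2 * (E 2 ^ (2 * c - 2) * T 2 ^ (c - 1)) =
      T 1 * T 2 ^ (c - 1) * (E 1 ^ 2 * E 2 ^ (2 * c - 2))"
    by (subst (1) E2) (simp only: ac_simps)
  also have "T 1 * T 2 ^ (c - 1) =
      (1 + 2 * scaled_squares_fps 1) * (1 + 2 * of_nat (c - 1) * scaled_squares_fps 2)"
    by (simp add: T_def one_plus_two_power_eq four_eq_zero_fps)
  also have "\<dots> = 1 + 2 * scaled_squares_fps 1 + 2 * of_nat (c + 1) * scaled_squares_fps 2"
  proof -
    have "2 * of_nat (c - 1) = (2 * of_nat (c + 1) :: 4 fps)"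
      using assms by (simp add: two_mult_of_nat_eq four_eq_zero_fps)
    then show ?thesis
      using four_eq_zero_fps by (simp add: algebra_simps)
  qed
  finally show "fps_map of_int (overcubic_int c) * (E 1 ^ 2 * E 2 ^ (2 * c - 2)) =
      (1 + 2 * scaled_squares_fps 1 + 2 * of_nat (c + 1) * scaled_squares_fps 2) *
        (E 1 ^ 2 * E 2 ^ (2 * c - 2))" .
  show "(E 1 ^ 2 * E 2 ^ (2 * c - 2)) $ 0 = 1"
    by (simp add: E_def fps_power_zeroth)
qed

lemma overcubic_int_nth_mod4:
  assumes "c \<ge> 1" and "n \<ge> 1"
  shows "(of_int (overcubic_int c $ n) :: 4) =
    of_int (if \<exists>k::int. int n = k ^ 2 then 2
            else if \<exists>k::int. int n = 2 * k ^ 2 then 2 * (int c + 1) else 0)"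
proof -
  have const: "(2 * of_nat (c + 1) :: 4 fps) = fps_const (2 * of_nat (c + 1))"
    by (simp add: numeral_fps_const flip: fps_of_nat)
  have "(of_int (overcubic_int c $ n) :: 4) = (fps_map of_int (overcubic_int c) :: 4 fps) $ n"
    by simp
  also have "\<dots> =
      (1 + 2 * scaled_squares_fps 1 + fps_const (2 * of_nat (c + 1)) * scaled_squares_fps 2) $ n"
    by (simp only: fps_map_overcubic_int_mod4[OF assms(1)] const)
  also have "\<dots> =
      2 * of_bool (\<exists>a. n = a ^ 2) + 2 * of_nat (c + 1) * of_bool (\<exists>a. n = 2 * a ^ 2)"
    using assms(2) by (simp add: fps_mult_left_const_nth scaled_squares_fps_def)
  finally have "(of_int (overcubic_int c $ n) :: 4) =
      2 * of_bool (\<exists>a. n = a ^ 2) + 2 * of_nat (c + 1) * of_bool (\<exists>a. n = 2 * a ^ 2)" .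
  moreover have "(\<exists>k::int. int n = k ^ 2) \<longleftrightarrow> (\<exists>a. n = a ^ 2)"
    using ex_int_square_iff[of n 1] by simp
  moreover have "(\<exists>k::int. int n = 2 * k ^ 2) \<longleftrightarrow> (\<exists>a. n = 2 * a ^ 2)"
    using ex_int_square_iff[of n 2] by simp
  moreover have "\<not> ((\<exists>a. n = a ^ 2) \<and> (\<exists>b. n = 2 * b ^ 2))"
    using assms(2) square_eq_twice_square_imp_zero by fastforce
  ultimately show ?thesis
    by auto
qed

theorem theorem1p3:
  fixes c n :: nat
  assumes "c \<ge> 1" and "n \<ge> 1"
  shows "\<exists>m::int. abar c n = of_int m \<and>
           [m = (if \<exists>k::int. int n = k ^ 2 then 2
                 else if \<exists>k::int. int n = 2 * k ^ 2 then 2 * (int c + 1)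
                 else 0)] (mod 4)"
proof -
  have "abar c n = of_int (overcubic_int c $ n)"
    using assms(1) by (simp add: abar_def overcubic_gf_eq_fps_map)
  moreover have "[overcubic_int c $ n = (if \<exists>k::int. int n = k ^ 2 then 2
                 else if \<exists>k::int. int n = 2 * k ^ 2 then 2 * (int c + 1)
                 else 0)] (mod 4)"
    using overcubic_int_nth_mod4[OF assms] of_int_eq_iff_cong_CHAR[where 'a = 4] by simp
  ultimately show ?thesis
    by blast
qed

end
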